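(* Let $n\ge 1$ and let $B=(b_{st})$ be an $n\times n$ symmetric matrix over the complex numbers. For $1\le i,j\le n$ let $B_{[ij]}=(b^{ij}_{st})$ be the $n\times n$ matrix with $b^{ij}_{st}=b_{st}$ if $(s,t)\ne(i,j)$ and $(s,t)\ne(j,i)$, and $b^{ij}_{st}=0$ otherwise. For $i<j$ let $B^{i,j}_{i,j}$ denote the $(n-2)\times(n-2)$ submatrix of $B$ obtained by deleting rows $i,j$ and columns $i,j$. Then $$\frac{1}{2}(n^2-n)\,d_2(B)=\sum_{1\le i\le j\le n} d_2(B_{[ij]})+\sum_{1\le i<j\le n} b_{ij}^2\, d_2(B^{i,j}_{i,j}).$$
   Context: For an $n\times n$ matrix $M=(m_{ij})$ ($n\ge 2$), the second immanant is $d_2(M)=\sum_{\sigma\in S_n}\chi_2(\sigma)\prod_{s=1}^n m_{s\sigma(s)}$, where $\chi_2$ is the irreducible character of the symmetric group $S_n$ corresponding to the partition $(2,1^{n-2})$. It satisfies $d_2(X)=\sum_{i=1}^k x_{ii}\det(X(i))-\det(X)$ for a $k\times k$ matrix $X$, where $X(i)$ is $X$ with row and column $i$ deleted; for matrices of order less than $2$, $d_2$ is understood via this identity, with the determinant of the empty ($0\times 0$) matrix equal to $1$. *)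

theory Defs
  imports "Jordan_Normal_Form.Determinant" Complex_Main
begin

text \<open>The irreducible character of S_n for the partition (2,1^(n-2)):
  chi_2(sigma) = sgn(sigma) * (number of fixed points of sigma - 1),
  i.e. the sign character times the standard character chi_(n-1,1).\<close>
definition chi2 :: "nat \<Rightarrow> (nat \<Rightarrow> nat) \<Rightarrow> int" where
  "chi2 n p = sign p * (int (card {i \<in> {0..<n}. p i = i}) - 1)"

text \<open>The second immanant d_2 of a square matrix (for dimension 0 and 1 this
  agrees with the identity d_2(X) = sum_i x_ii det X(i) - det X,
  giving d_2 = -1 for the empty matrix and 0 for 1x1 matrices).\<close>
definition d2 :: "'a :: comm_ring_1 mat \<Rightarrow> 'a" where
  "d2 A = (\<Sum>p \<in> {p. p permutes {0..<dim_row A}}.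
      of_int (chi2 (dim_row A) p) * (\<Prod>s = 0..<dim_row A. A $$ (s, p s)))"

definition zero_pair :: "'a :: zero mat \<Rightarrow> nat \<Rightarrow> nat \<Rightarrow> 'a mat" where
  "zero_pair B i j = mat (dim_row B) (dim_col B)
     (\<lambda>(s,t). if (s,t) = (i,j) \<or> (s,t) = (j,i) then 0 else B $$ (s,t))"

text \<open>For i < j: delete rows i,j and columns i,j (after deleting i, index j becomes j-1).\<close>
definition del2 :: "'a mat \<Rightarrow> nat \<Rightarrow> nat \<Rightarrow> 'a mat" where
  "del2 B i j = mat_delete (mat_delete B i i) (j - 1) (j - 1)"

end

theory Submission
  imports Defs
begin

(*
  Expand d2 B as the sum over permutations p of chi2(p) * prod_s b(s, p s). The term of p
  survives in d2 (B_[ij]) exactly when p uses neither position (i,j) nor (j,i). Relabelling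
  i, j as the last two indices shows that b_ij^2 * d2 (B^{i,j}_{i,j}) is minus the sum of the
  terms of the p that swap i and j: composing a permutation of the other indices with the
  transposition (i j) flips the sign and adds no fixed point. Hence the right-hand side is
  the sum of c_p times the term of p, where c_p is the number of pairs i <= j not used by p
  minus the number of 2-cycles of p. Every s gives the used pair {s, p s}, each 2-cycle
  being counted twice, so used pairs plus 2-cycles number n and c_p = n(n+1)/2 - n.
*)

definition d2_term :: "'a::comm_ring_1 mat \<Rightarrow> (nat \<Rightarrow> nat) \<Rightarrow> 'a" where
  "d2_term A p = of_int (chi2 (dim_row A) p) * (\<Prod>s = 0..<dim_row A. A $$ (s, p s))"

lemma d2_eq_sum_d2_term: "d2 A = (\<Sum>p | p permutes {0..<dim_row A}. d2_term A p)"
  unfolding d2_def d2_term_def ..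

lemma d2_term_zero_pair:
  assumes B: "B \<in> carrier_mat n n" and p: "p permutes {0..<n}" and ij: "i < n" "j < n"
  shows "d2_term (zero_pair B i j) p = (if p i \<noteq> j \<and> p j \<noteq> i then d2_term B p else 0)"
proof -
  have dim: "dim_row (zero_pair B i j) = n"
    using B by (simp add: zero_pair_def)
  have entry: "zero_pair B i j $$ (s, p s) =
      (if (s, p s) = (i, j) \<or> (s, p s) = (j, i) then 0 else B $$ (s, p s))" if "s < n" for s
    using B that permutes_in_image[OF p] by (simp add: zero_pair_def)
  show ?thesis
  proof (cases "p i \<noteq> j \<and> p j \<noteq> i")
    case True
    then have "(\<Prod>s = 0..<n. zero_pair B i j $$ (s, p s)) = (\<Prod>s = 0..<n. B $$ (s, p s))"
      using entry by (intro prod.cong) auto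
    with True B show ?thesis by (simp add: d2_term_def dim)
  next
    case False
    then have "\<exists>s \<in> {0..<n}. zero_pair B i j $$ (s, p s) = 0"
      using entry[of i] entry[of j] ij by auto
    then have "(\<Prod>s = 0..<n. zero_pair B i j $$ (s, p s)) = 0"
      by (intro prod_zero) auto
    with False show ?thesis by (auto simp: d2_term_def dim)
  qed
qed

lemma d2_zero_pair:
  assumes "B \<in> carrier_mat n n" "i < n" "j < n"
  shows "d2 (zero_pair B i j) =
    (\<Sum>p | p permutes {0..<n} \<and> p i \<noteq> j \<and> p j \<noteq> i. d2_term B p)"
proof -
  have "dim_row (zero_pair B i j) = n"
    using assms(1) by (simp add: zero_pair_def)
  then have "d2 (zero_pair B i j) =
      (\<Sum>p | p permutes {0..<n}. if p i \<noteq> j \<and> p j \<noteq> i then d2_term B p else 0)"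
    using d2_term_zero_pair[OF assms(1) _ assms(2,3)] by (simp add: d2_eq_sum_d2_term)
  also have "\<dots> = (\<Sum>p | p permutes {0..<n} \<and> p i \<noteq> j \<and> p j \<noteq> i. d2_term B p)"
    by (simp add: sum.inter_filter[symmetric] finite_permutations conj_assoc)
  finally show ?thesis .
qed

(* For i < j, skip2 i j enumerates the naturals other than i and j in increasing order. *)
definition skip2 :: "nat \<Rightarrow> nat \<Rightarrow> nat \<Rightarrow> nat" where
  "skip2 i j s = (if s < i then s else if Suc s < j then Suc s else Suc (Suc s))"

lemma del2_entry:
  assumes "B \<in> carrier_mat n n" "i < j" "j < n" "s < n - 2" "t < n - 2"
  shows "del2 B i j $$ (s, t) = B $$ (skip2 i j s, skip2 i j t)"
  using assms by (auto simp: del2_def mat_delete_def skip2_def)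

definition relabel2 :: "nat \<Rightarrow> nat \<Rightarrow> nat \<Rightarrow> nat \<Rightarrow> nat" where
  "relabel2 m i j s =
    (if s < m then skip2 i j s else if s = m then i else if s = Suc m then j else s)"

lemma relabel2_permutes:
  assumes "i < j" "j < Suc (Suc m)"
  shows "relabel2 m i j permutes {0..<Suc (Suc m)}"
proof -
  let ?S = "{0..<Suc (Suc m)}"
  have "inj_on (relabel2 m i j) ?S" "relabel2 m i j ` ?S \<subseteq> ?S"
    using assms by (auto simp: inj_on_def relabel2_def skip2_def)
  then have "bij_betw (relabel2 m i j) ?S ?S"
    by (simp add: bij_betw_def endo_inj_surj)
  then show ?thesis
    by (rule bij_imp_permutes) (simp add: relabel2_def)
qed

lemma chi2_conj:
  assumes E: "E permutes {0..<n}" and p: "p permutes {0..<n}"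
  shows "chi2 n (E \<circ> p \<circ> Hilbert_Choice.inv E) = chi2 n p"
proof -
  have "permutation E" "permutation p"
    using E p by (simp_all add: permutes_imp_permutation[OF finite_atLeastLessThan])
  then have "sign (E \<circ> p \<circ> Hilbert_Choice.inv E) = sign p"
    by (simp add: sign_compose sign_inverse permutation_compose permutation_inverse)
  moreover have "{k \<in> {0..<n}. (E \<circ> p \<circ> Hilbert_Choice.inv E) k = k} =
      E ` {k \<in> {0..<n}. p k = k}"
    using permutes_inverses[OF E] permutes_in_image[OF E]
    by (auto simp: image_iff permutes_inj[OF E, THEN inj_eq]) metis
  moreover have "inj_on E {k \<in> {0..<n}. p k = k}"
    using permutes_inj[OF E] by (rule inj_on_subset) simp
  ultimately show ?thesis
    by (simp add: chi2_def card_image)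
qed

lemma chi2_swap_last:
  assumes "\<tau> permutes {0..<m}"
  shows "chi2 (Suc (Suc m)) (\<tau> \<circ> transpose m (Suc m)) = - chi2 m \<tau>"
proof -
  have fixed: "\<tau> m = m" "\<tau> (Suc m) = Suc m"
    using assms by (simp_all add: permutes_not_in)
  have "sign (\<tau> \<circ> transpose m (Suc m)) = - sign \<tau>"
    using permutes_imp_permutation[OF finite_atLeastLessThan assms]
    by (simp add: sign_compose permutation_swap_id sign_swap_id)
  moreover have "{k \<in> {0..<Suc (Suc m)}. (\<tau> \<circ> transpose m (Suc m)) k = k} =
      {k \<in> {0..<m}. \<tau> k = k}"
    using fixed by (auto simp: less_Suc_eq)
  ultimately show ?thesis
    by (simp add: chi2_def)
qed

lemma bij_betw_swap_last:
  "bij_betw (\<lambda>\<tau>. \<tau> \<circ> transpose m (Suc m)) {\<tau>. \<tau> permutes {0..<m}}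
     {\<sigma>. \<sigma> permutes {0..<Suc (Suc m)} \<and> \<sigma> m = Suc m \<and> \<sigma> (Suc m) = m}"
proof (rule bij_betw_byWitness[where f' = "\<lambda>\<sigma>. \<sigma> \<circ> transpose m (Suc m)"])
  have swap: "transpose m (Suc m) permutes {0..<Suc (Suc m)}"
    by (simp add: permutes_swap_id)
  show "(\<lambda>\<tau>. \<tau> \<circ> transpose m (Suc m)) ` {\<tau>. \<tau> permutes {0..<m}} \<subseteq>
      {\<sigma>. \<sigma> permutes {0..<Suc (Suc m)} \<and> \<sigma> m = Suc m \<and> \<sigma> (Suc m) = m}"
  proof safe
    fix \<tau> assume \<tau>: "\<tau> permutes {0..<m}"
    then have "\<tau> permutes {0..<Suc (Suc m)}"
      by (rule permutes_subset) auto
    then show "\<tau> \<circ> transpose m (Suc m) permutes {0..<Suc (Suc m)}"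
      using swap by (rule permutes_compose[rotated])
    show "(\<tau> \<circ> transpose m (Suc m)) m = Suc m" "(\<tau> \<circ> transpose m (Suc m)) (Suc m) = m"
      using \<tau> by (simp_all add: permutes_not_in)
  qed
  show "(\<lambda>\<sigma>. \<sigma> \<circ> transpose m (Suc m)) `
      {\<sigma>. \<sigma> permutes {0..<Suc (Suc m)} \<and> \<sigma> m = Suc m \<and> \<sigma> (Suc m) = m} \<subseteq>
      {\<tau>. \<tau> permutes {0..<m}}"
  proof safe
    fix \<sigma> assume \<sigma>: "\<sigma> permutes {0..<Suc (Suc m)}" "\<sigma> m = Suc m" "\<sigma> (Suc m) = m"
    have "\<sigma> \<circ> transpose m (Suc m) permutes {0..<Suc (Suc m)}"
      using swap \<sigma>(1) by (rule permutes_compose)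
    then show "\<sigma> \<circ> transpose m (Suc m) permutes {0..<m}"
      by (rule permutes_superset) (use \<sigma> in \<open>auto simp: less_Suc_eq\<close>)
  qed
qed (simp_all add: fun_eq_iff)

lemma bij_betw_conj_perm:
  assumes E: "E permutes S"
  shows "bij_betw (\<lambda>\<sigma>. E \<circ> \<sigma> \<circ> Hilbert_Choice.inv E)
    {\<sigma>. \<sigma> permutes S \<and> \<sigma> a = b \<and> \<sigma> b = a}
    {\<sigma>. \<sigma> permutes S \<and> \<sigma> (E a) = E b \<and> \<sigma> (E b) = E a}"
  using permutes_inv[OF E] permutes_inverses[OF E]
  by (intro bij_betw_byWitness[where f' = "\<lambda>\<sigma>. Hilbert_Choice.inv E \<circ> \<sigma> \<circ> E"])
    (auto simp: fun_eq_iff intro!: permutes_compose E)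

lemma d2_term_relabel_swap:
  fixes B :: "'a::comm_ring_1 mat"
  assumes B: "B \<in> carrier_mat (Suc (Suc m)) (Suc (Suc m))" and B_sym: "transpose_mat B = B"
    and ij: "i < j" "j < Suc (Suc m)" and \<tau>: "\<tau> permutes {0..<m}"
  defines "E \<equiv> relabel2 m i j"
  shows "d2_term B (E \<circ> (\<tau> \<circ> transpose m (Suc m)) \<circ> Hilbert_Choice.inv E) =
    - (B $$ (i, j))\<^sup>2 * d2_term (del2 B i j) \<tau>"
proof -
  let ?n = "Suc (Suc m)" and ?\<sigma> = "\<tau> \<circ> transpose m (Suc m)"
  have E: "E permutes {0..<?n}"
    unfolding E_def using ij by (rule relabel2_permutes)
  have Em: "E m = i" "E (Suc m) = j"
    by (simp_all add: E_def relabel2_def)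
  have \<sigma>: "?\<sigma> permutes {0..<?n}"
    using bij_betw_swap_last[of m] \<tau> by (auto dest: bij_betw_apply)
  have chi: "chi2 ?n (E \<circ> ?\<sigma> \<circ> Hilbert_Choice.inv E) = - chi2 m \<tau>"
    using chi2_conj[OF E \<sigma>] chi2_swap_last[OF \<tau>] by simp
  have "(\<Prod>s = 0..<?n. B $$ (s, (E \<circ> ?\<sigma> \<circ> Hilbert_Choice.inv E) s)) =
      (\<Prod>s = 0..<?n. B $$ (E s, (E \<circ> ?\<sigma> \<circ> Hilbert_Choice.inv E) (E s)))"
    by (rule prod.reindex_bij_betw[OF permutes_imp_bij[OF E], symmetric])
  also have "\<dots> = (\<Prod>s = 0..<?n. B $$ (E s, E (?\<sigma> s)))"
    by (simp add: permutes_inverses[OF E])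
  also have "\<dots> = (\<Prod>s = 0..<m. B $$ (E s, E (\<tau> s))) * B $$ (i, j) * B $$ (j, i)"
    using \<tau> Em by (simp add: permutes_not_in)
  also have "(\<Prod>s = 0..<m. B $$ (E s, E (\<tau> s))) = (\<Prod>s = 0..<m. del2 B i j $$ (s, \<tau> s))"
    using B ij permutes_in_image[OF \<tau>]
    by (intro prod.cong) (auto simp: E_def relabel2_def del2_entry)
  also have "B $$ (j, i) = B $$ (i, j)"
    using B ij by (subst B_sym[symmetric]) simp
  finally have prod: "(\<Prod>s = 0..<?n. B $$ (s, (E \<circ> ?\<sigma> \<circ> Hilbert_Choice.inv E) s)) =
      (B $$ (i, j))\<^sup>2 * (\<Prod>s = 0..<m. del2 B i j $$ (s, \<tau> s))"
    by (simp add: power2_eq_square algebra_simps)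
  have dims: "dim_row B = ?n" "dim_row (del2 B i j) = m"
    using B by (simp_all add: del2_def)
  show ?thesis
    unfolding d2_term_def dims prod chi by simp
qed

lemma d2_del2:
  fixes B :: "'a::comm_ring_1 mat"
  assumes B: "B \<in> carrier_mat n n" and B_sym: "transpose_mat B = B" and ij: "i < j" "j < n"
  shows "(B $$ (i, j))\<^sup>2 * d2 (del2 B i j) =
    - (\<Sum>\<sigma> | \<sigma> permutes {0..<n} \<and> \<sigma> i = j \<and> \<sigma> j = i. d2_term B \<sigma>)"
proof -
  define m where "m = n - 2"
  have n: "n = Suc (Suc m)"
    unfolding m_def using ij by arith
  define E where "E = relabel2 m i j"
  have E: "E permutes {0..<n}"
    unfolding n E_def using ij n by (intro relabel2_permutes) auto
  have "bij_betw (\<lambda>\<sigma>. E \<circ> \<sigma> \<circ> Hilbert_Choice.inv E)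
      {\<sigma>. \<sigma> permutes {0..<n} \<and> \<sigma> m = Suc m \<and> \<sigma> (Suc m) = m}
      {\<sigma>. \<sigma> permutes {0..<n} \<and> \<sigma> i = j \<and> \<sigma> j = i}"
    using bij_betw_conj_perm[OF E, of m "Suc m"] by (simp add: E_def relabel2_def)
  then have "(\<Sum>\<sigma> | \<sigma> permutes {0..<n} \<and> \<sigma> i = j \<and> \<sigma> j = i. d2_term B \<sigma>) =
      (\<Sum>\<sigma> | \<sigma> permutes {0..<n} \<and> \<sigma> m = Suc m \<and> \<sigma> (Suc m) = m.
        d2_term B (E \<circ> \<sigma> \<circ> Hilbert_Choice.inv E))"
    by (rule sum.reindex_bij_betw[symmetric])
  also have "\<dots> = (\<Sum>\<tau> | \<tau> permutes {0..<m}.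
      d2_term B (E \<circ> (\<tau> \<circ> transpose m (Suc m)) \<circ> Hilbert_Choice.inv E))"
    unfolding n by (rule sum.reindex_bij_betw[OF bij_betw_swap_last, symmetric])
  also have "\<dots> = (\<Sum>\<tau> | \<tau> permutes {0..<m}. - (B $$ (i, j))\<^sup>2 * d2_term (del2 B i j) \<tau>)"
    using B B_sym ij unfolding n E_def by (intro sum.cong refl d2_term_relabel_swap) auto
  also have "\<dots> = - (B $$ (i, j))\<^sup>2 * d2 (del2 B i j)"
    using B unfolding n by (simp add: d2_eq_sum_d2_term sum_distrib_left del2_def)
  finally show ?thesis
    by simp
qed

lemma card_used_pairs_add_card_swaps:
  assumes p: "p permutes {0..<n}"
  shows "card {(i, j). i \<le> j \<and> j < n \<and> (p i = j \<or> p j = i)}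
    + card {(i, j). i < j \<and> j < n \<and> p i = j \<and> p j = i} = n"
proof -
  define X where "X = {(i, j). i \<le> j \<and> j < n \<and> p i = j}"
  define Y where "Y = {(i, j). i < j \<and> j < n \<and> p j = i}"
  have p_lt: "p s < n" if "s < n" for s
    using permutes_in_image[OF p] that by simp
  have "X = (\<lambda>s. (s, p s)) ` {s \<in> {0..<n}. s \<le> p s}"
    using p_lt by (auto simp: X_def)
  then have "card X = card {s \<in> {0..<n}. s \<le> p s}"
    by (simp add: card_image inj_on_def)
  moreover have "Y = (\<lambda>s. (p s, s)) ` {s \<in> {0..<n}. \<not> s \<le> p s}"
    using p_lt by (auto simp: Y_def)
  then have "card Y = card {s \<in> {0..<n}. \<not> s \<le> p s}"
    by (simp add: card_image inj_on_def)
  moreover have "card {s \<in> {0..<n}. s \<le> p s} + card {s \<in> {0..<n}. \<not> s \<le> p s} =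
      card ({s \<in> {0..<n}. s \<le> p s} \<union> {s \<in> {0..<n}. \<not> s \<le> p s})"
    by (rule card_Un_disjoint[symmetric]) auto
  moreover have "{s \<in> {0..<n}. s \<le> p s} \<union> {s \<in> {0..<n}. \<not> s \<le> p s} = {0..<n}"
    by auto
  moreover have "finite X" "finite Y"
    by (rule finite_subset[of _ "{0..<n} \<times> {0..<n}"]; auto simp: X_def Y_def)+
  then have "card X + card Y = card (X \<union> Y) + card (X \<inter> Y)"
    by (rule card_Un_Int)
  moreover have "X \<union> Y = {(i, j). i \<le> j \<and> j < n \<and> (p i = j \<or> p j = i)}"
    by (auto simp: X_def Y_def)
  moreover have "X \<inter> Y = {(i, j). i < j \<and> j < n \<and> p i = j \<and> p j = i}"
    by (auto simp: X_def Y_def)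
  ultimately show ?thesis
    by simp
qed

lemma card_pairs_le: "2 * card {(i :: nat, j). i \<le> j \<and> j < n} = n * (n + 1)"
proof (induction n)
  case 0
  then show ?case by simp
next
  case (Suc n)
  let ?T = "{(i :: nat, j). i \<le> j \<and> j < n}"
  have "finite ?T"
    by (rule finite_subset[of _ "{0..<n} \<times> {0..<n}"]) auto
  then have "card (?T \<union> (\<lambda>i. (i, n)) ` {0..n}) = card ?T + card ((\<lambda>i. (i, n)) ` {0..n})"
    by (rule card_Un_disjoint) auto
  also have "?T \<union> (\<lambda>i. (i, n)) ` {0..n} = {(i, j). i \<le> j \<and> j < Suc n}"
    by auto
  also have "card ((\<lambda>i. (i, n)) ` {0..n}) = Suc n"
    by (simp add: card_image inj_on_def)
  finally show ?case
    using Suc by simp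
qed

lemma card_unused_pairs_diff_card_swaps:
  assumes "p permutes {0..<n}"
  shows "(of_nat (card {(i, j). i \<le> j \<and> j < n \<and> p i \<noteq> j \<and> p j \<noteq> i})
    - of_nat (card {(i, j). i < j \<and> j < n \<and> p i = j \<and> p j = i}) :: 'a::field_char_0)
    = of_nat (n\<^sup>2 - n) / 2"
proof -
  let ?T = "{(i, j). i \<le> j \<and> j < n}"
  let ?U = "{(i, j). i \<le> j \<and> j < n \<and> p i \<noteq> j \<and> p j \<noteq> i}"
  let ?H = "{(i, j). i \<le> j \<and> j < n \<and> (p i = j \<or> p j = i)}"
  let ?W = "{(i, j). i < j \<and> j < n \<and> p i = j \<and> p j = i}"
  have "finite ?T"
    by (rule finite_subset[of _ "{0..<n} \<times> {0..<n}"]) auto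
  then have "finite ?U" "finite ?H"
    by (auto elim: finite_subset[rotated])
  then have "card ?U + card ?H = card (?U \<union> ?H)"
    by (rule card_Un_disjoint[symmetric]) auto
  also have "?U \<union> ?H = ?T"
    by auto
  finally have "card ?U + card ?H = card ?T" .
  then have "2 * card ?U + 2 * n = n * (n + 1) + 2 * card ?W"
    using card_pairs_le[of n] card_used_pairs_add_card_swaps[OF assms] by linarith
  then have "(of_nat (2 * card ?U + 2 * n) :: 'a) = of_nat (n * (n + 1) + 2 * card ?W)"
    by (rule arg_cong)
  then have "2 * of_nat (card ?U) + 2 * of_nat n = of_nat n * (of_nat n + 1) + 2 * (of_nat (card ?W) :: 'a)"
    by (simp add: algebra_simps)
  moreover have "of_nat (n\<^sup>2 - n) = (of_nat n ^ 2 - of_nat n :: 'a)"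
    by (simp add: of_nat_diff power2_eq_square)
  ultimately show ?thesis
    by (simp add: field_simps power2_eq_square)
qed

lemma sum_swap_restrict_card:
  assumes "finite A" "finite P"
  shows "(\<Sum>x\<in>A. \<Sum>p | p \<in> P \<and> R x p. f p) = (\<Sum>p\<in>P. of_nat (card {x \<in> A. R x p}) * f p)"
  using sum.swap_restrict[OF assms, of "\<lambda>x p. f p" R] by simp

lemma sum_d2_zero_pair:
  assumes "B \<in> carrier_mat n n"
  shows "(\<Sum>(i, j) \<in> {(i, j). i \<le> j \<and> j < n}. d2 (zero_pair B i j)) =
    (\<Sum>p | p permutes {0..<n}.
      of_nat (card {(i, j). i \<le> j \<and> j < n \<and> p i \<noteq> j \<and> p j \<noteq> i}) * d2_term B p)"
proof -
  let ?T = "{(i, j). i \<le> j \<and> j < n}"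
  have fin: "finite ?T" "finite {p. p permutes {0..<n}}"
    by (auto simp: finite_permutations intro: finite_subset[of _ "{0..<n} \<times> {0..<n}"])
  have "(\<Sum>(i, j) \<in> ?T. d2 (zero_pair B i j)) = (\<Sum>x \<in> ?T. \<Sum>p | p \<in> {p. p permutes {0..<n}}
      \<and> (case x of (i, j) \<Rightarrow> p i \<noteq> j \<and> p j \<noteq> i). d2_term B p)"
    using assms by (intro sum.cong refl) (auto simp: d2_zero_pair)
  also have "\<dots> = (\<Sum>p | p permutes {0..<n}.
      of_nat (card {(i, j). i \<le> j \<and> j < n \<and> p i \<noteq> j \<and> p j \<noteq> i}) * d2_term B p)"
    unfolding sum_swap_restrict_card[OF fin]
    by (intro sum.cong refl arg_cong2[where f = "(*)"] arg_cong[where f = "\<lambda>X. of_nat (card X)"]) auto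
  finally show ?thesis .
qed

lemma sum_d2_del2:
  assumes "B \<in> carrier_mat n n" "transpose_mat B = B"
  shows "(\<Sum>(i, j) \<in> {(i, j). i < j \<and> j < n}. (B $$ (i, j))\<^sup>2 * d2 (del2 B i j)) =
    - (\<Sum>p | p permutes {0..<n}.
      of_nat (card {(i, j). i < j \<and> j < n \<and> p i = j \<and> p j = i}) * d2_term B p)"
proof -
  let ?S = "{(i, j). i < j \<and> j < n}"
  have fin: "finite ?S" "finite {p. p permutes {0..<n}}"
    by (auto simp: finite_permutations intro: finite_subset[of _ "{0..<n} \<times> {0..<n}"])
  have "(\<Sum>(i, j) \<in> ?S. (B $$ (i, j))\<^sup>2 * d2 (del2 B i j)) = - (\<Sum>x \<in> ?S.
      \<Sum>p | p \<in> {p. p permutes {0..<n}} \<and> (case x of (i, j) \<Rightarrow> p i = j \<and> p j = i). d2_term B p)"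
    using assms by (subst sum_negf[symmetric], intro sum.cong refl) (auto simp: d2_del2)
  also have "\<dots> = - (\<Sum>p | p permutes {0..<n}.
      of_nat (card {(i, j). i < j \<and> j < n \<and> p i = j \<and> p j = i}) * d2_term B p)"
    unfolding sum_swap_restrict_card[OF fin]
    by (intro arg_cong[where f = uminus] sum.cong refl arg_cong2[where f = "(*)"]
        arg_cong[where f = "\<lambda>X. of_nat (card X)"]) auto
  finally show ?thesis .
qed

theorem lemma2p3:
  fixes B :: "complex mat" and n :: nat
  assumes "n \<ge> 1"
    and "B \<in> carrier_mat n n"
    and "transpose_mat B = B"
  shows "(of_nat (n^2 - n) / 2) * d2 B =
           (\<Sum>(i,j) \<in> {(i,j). i \<le> j \<and> j < n}. d2 (zero_pair B i j))
         + (\<Sum>(i,j) \<in> {(i,j). i < j \<and> j < n}. (B $$ (i,j))^2 * d2 (del2 B i j))"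
proof -
  let ?U = "\<lambda>p. {(i, j). i \<le> j \<and> j < n \<and> p i \<noteq> j \<and> p j \<noteq> i}"
  let ?W = "\<lambda>p. {(i, j). i < j \<and> j < n \<and> p i = j \<and> p j = i}"
  have "(\<Sum>(i,j) \<in> {(i,j). i \<le> j \<and> j < n}. d2 (zero_pair B i j))
      + (\<Sum>(i,j) \<in> {(i,j). i < j \<and> j < n}. (B $$ (i,j))^2 * d2 (del2 B i j)) =
      (\<Sum>p | p permutes {0..<n}. (of_nat (card (?U p)) - of_nat (card (?W p))) * d2_term B p)"
    using assms(2,3) by (simp add: sum_d2_zero_pair sum_d2_del2 left_diff_distrib sum_subtractf)
  also have "\<dots> = (\<Sum>p | p permutes {0..<n}. of_nat (n\<^sup>2 - n) / 2 * d2_term B p)"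
    by (intro sum.cong refl) (simp add: card_unused_pairs_diff_card_swaps)
  also have "\<dots> = of_nat (n\<^sup>2 - n) / 2 * d2 B"
    using assms(2) by (simp add: d2_eq_sum_d2_term sum_distrib_left)
  finally show ?thesis
    by simp
qed

end
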